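(* Let $p\ge 3$ and $X\sim\mathrm{S1}(\mu_0,\mu_1,\kappa_0,\kappa_1)$. Then the expectation $E(X)\in\mathbb{R}^p$ (of $X$ viewed as a random vector in the ambient space $\mathbb{R}^p$) is a linear combination of $\mu_0$ and $\mu_1$.
   Context: For parameters $\mu_0,\mu_1\in\mathbb{S}^{p-1}$ with $\nu=\mu_0^\top\mu_1\in(-1,1)$ and $\kappa_0,\kappa_1>0$, $\mathrm{S1}(\mu_0,\mu_1,\kappa_0,\kappa_1)$ denotes the distribution on $\mathbb{S}^{p-1}$ with density (w.r.t. surface measure) proportional to $\exp\{-\kappa_0(\mu_0^\top x-\nu)^2+\kappa_1\mu_1^\top x\}$. *)

theory Defs
  imports "HOL-Analysis.Analysis" "HOL-Probability.Probability"
begin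

text \<open>Surface measure on the unit sphere S^(p-1) of a Euclidean space of dimension p,
  realised as the cone measure: sigma(A) = p * Leb({t x. x in A, 0 <= t <= 1}),
  i.e. p times the push-forward of Lebesgue measure on the open unit ball
  under the radial projection x |-> x / |x| (the origin is a null set).\<close>
definition sphere_surface :: "'a::euclidean_space measure" where
  "sphere_surface =
     density (distr (restrict_space lborel (ball 0 1)) borel sgn) (\<lambda>_. ennreal (real DIM('a)))"

definition S1_dens :: "'a::euclidean_space \<Rightarrow> 'a \<Rightarrow> real \<Rightarrow> real \<Rightarrow> 'a \<Rightarrow> real" where
  "S1_dens \<mu>0 \<mu>1 \<kappa>0 \<kappa>1 x =
     exp (- \<kappa>0 * ((\<mu>0 \<bullet> x) - (\<mu>0 \<bullet> \<mu>1))\<^sup>2 + \<kappa>1 * (\<mu>1 \<bullet> x))"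

definition S1 :: "'a::euclidean_space \<Rightarrow> 'a \<Rightarrow> real \<Rightarrow> real \<Rightarrow> 'a measure" where
  "S1 \<mu>0 \<mu>1 \<kappa>0 \<kappa>1 =
     density sphere_surface
       (\<lambda>x. ennreal (S1_dens \<mu>0 \<mu>1 \<kappa>0 \<kappa>1 x /
                     integral\<^sup>L sphere_surface (S1_dens \<mu>0 \<mu>1 \<kappa>0 \<kappa>1)))"

end

theory Submission
  imports Defs
begin

text \<open>The density of S1 depends on x only through \<open>\<mu>0 \<bullet> x\<close> and \<open>\<mu>1 \<bullet> x\<close>, and surface measure
  is invariant under orthogonal maps, so S1 is invariant under every reflection in a hyperplane
  containing \<open>\<mu>0\<close> and \<open>\<mu>1\<close>. The mean is then fixed by all these reflections, which forces it
  into the span of \<open>\<mu>0\<close> and \<open>\<mu>1\<close>.\<close>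

lemma borel_measurable_linear:
  "linear (f :: 'a::euclidean_space \<Rightarrow> 'b::euclidean_space) \<Longrightarrow> f \<in> borel_measurable borel"
  by (intro borel_measurable_continuous_onI linear_continuous_on) (simp add: linear_conv_bounded_linear)

lemma lborel_distr_isometry_Basis:
  fixes \<phi> :: "'a::euclidean_space \<Rightarrow> 'b::euclidean_space" and \<psi> :: "'b \<Rightarrow> 'a"
  assumes lin: "linear \<phi>"
    and inv: "\<And>y. \<phi> (\<psi> y) = y"
    and bij: "bij_betw \<phi> Basis Basis"
    and inn: "\<And>x y. \<phi> x \<bullet> \<phi> y = x \<bullet> y"
  shows "distr lborel borel \<phi> = lborel"
proof (rule lborel_eqI[symmetric])
  have [measurable]: "\<phi> \<in> borel_measurable borel"
    using lin by (rule borel_measurable_linear)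
  have adjoint: "\<psi> y \<bullet> a = y \<bullet> \<phi> a" for y a
    by (metis inn inv)
  fix l u :: 'b assume le: "\<And>b. b \<in> Basis \<Longrightarrow> l \<bullet> b \<le> u \<bullet> b"
  have "x \<in> box (\<psi> l) (\<psi> u) \<longleftrightarrow> (\<forall>b\<in>\<phi> ` Basis. l \<bullet> b < \<phi> x \<bullet> b \<and> \<phi> x \<bullet> b < u \<bullet> b)" for x
    by (simp add: mem_box adjoint inn)
  then have preimage: "\<phi> -` box l u = box (\<psi> l) (\<psi> u)"
    using bij unfolding bij_betw_def by (auto simp: mem_box simp del: ball_simps)
  have "\<forall>a\<in>Basis. \<psi> l \<bullet> a \<le> \<psi> u \<bullet> a"
    using bij le by (auto simp: adjoint bij_betw_def)
  then have "emeasure (distr lborel borel \<phi>) (box l u) = (\<Prod>a\<in>Basis. (\<psi> u - \<psi> l) \<bullet> a)"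
    by (simp add: emeasure_distr preimage emeasure_lborel_box_eq)
  also have "\<dots> = (\<Prod>a\<in>Basis. (u - l) \<bullet> \<phi> a)"
    by (simp add: inner_diff_left adjoint)
  also have "\<dots> = (\<Prod>b\<in>Basis. (u - l) \<bullet> b)"
    using prod.reindex_bij_betw[OF bij, of "\<lambda>b. (u - l) \<bullet> b"] by simp
  finally show "emeasure (distr lborel borel \<phi>) (box l u) = (\<Prod>b\<in>Basis. (u - l) \<bullet> b)" .
qed simp

lemma lborel_distr_orthogonal_transformation_vec:
  fixes g :: "real^'n::{finite,wellorder} \<Rightarrow> real^'n::{finite,wellorder}"
  assumes g: "orthogonal_transformation g"
  shows "distr lborel borel g = lborel"
proof (rule lborel_eqI[symmetric])
  have [measurable]: "g \<in> borel_measurable borel"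
    using g by (intro borel_measurable_linear orthogonal_transformation_linear)
  have ginv: "orthogonal_transformation (inv g)"
    using g by (rule orthogonal_transformation_inv)
  have preimage: "g -` B = inv g ` B" for B
    using orthogonal_transformation_bij[OF g] by (simp add: bij_vimage_eq_inv_image)
  fix l u :: "real^'n::{finite,wellorder}" assume le: "\<And>b. b \<in> Basis \<Longrightarrow> l \<bullet> b \<le> u \<bullet> b"
  have "bounded (g -` box l u)"
    unfolding preimage using orthogonal_transformation_linear[OF ginv]
    by (intro bounded_linear_image) (auto simp: linear_conv_bounded_linear)
  then have "emeasure (distr lborel borel g) (box l u) = emeasure lborel (g -` box l u)"
    by (simp add: emeasure_distr)
  also have "\<dots> = measure lborel (g -` box l u)"
    using emeasure_bounded_finite[OF \<open>bounded (g -` box l u)\<close>]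
    by (simp add: emeasure_eq_ennreal_measure)
  also have "measure lborel (g -` box l u) = measure lebesgue (inv g ` box l u)"
    using measurable_sets_borel[of g borel "box l u"] by (simp add: preimage)
  also have "\<dots> = measure lborel (box l u)"
    using ginv by (simp add: measure_orthogonal_image)
  also have "\<dots> = (\<Prod>b\<in>Basis. (u - l) \<bullet> b)"
    using le by (simp add: measure_lborel_box_eq prod_nonneg)
  finally show "emeasure (distr lborel borel g) (box l u) = (\<Prod>b\<in>Basis. (u - l) \<bullet> b)" .
qed simp

text \<open>The library proves invariance of Lebesgue measure under orthogonal maps only on
  \<open>real^'n\<close> with a well-ordered index type; this type serves as such an index for an
  arbitrary Euclidean space.\<close>

typedef (overloaded) ('a::euclidean_space) basis_idx = "{..<DIM('a)}"
  morphisms idx_nat Abs_basis_idx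
  by (rule exI[of _ 0]) simp

instance basis_idx :: (euclidean_space) finite
proof
  have "(UNIV :: 'a basis_idx set) = Abs_basis_idx ` {..<DIM('a)}"
    using type_definition.univ[OF type_definition_basis_idx] by simp
  then show "finite (UNIV :: 'a basis_idx set)"
    by (metis finite_imageI finite_lessThan)
qed

instantiation basis_idx :: (euclidean_space) wellorder
begin

definition less_eq_basis_idx :: "'a basis_idx \<Rightarrow> 'a basis_idx \<Rightarrow> bool"
  where "less_eq_basis_idx i j \<longleftrightarrow> idx_nat i \<le> idx_nat j"

definition less_basis_idx :: "'a basis_idx \<Rightarrow> 'a basis_idx \<Rightarrow> bool"
  where "less_basis_idx i j \<longleftrightarrow> idx_nat i < idx_nat j"

instance
proof
  fix P :: "'a basis_idx \<Rightarrow> bool" and a :: "'a basis_idx"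
  assume step: "\<And>x. (\<And>y. y < x \<Longrightarrow> P y) \<Longrightarrow> P x"
  have "\<forall>x. idx_nat x = n \<longrightarrow> P x" for n
    by (induction n rule: less_induct) (metis step less_basis_idx_def)
  then show "P a" by blast
qed (auto simp: less_eq_basis_idx_def less_basis_idx_def idx_nat_inject)

end

lemma ex_bij_basis_idx: "\<exists>E :: 'a basis_idx \<Rightarrow> 'a::euclidean_space. bij_betw E UNIV Basis"
proof -
  obtain e :: "nat \<Rightarrow> 'a" where e: "bij_betw e {..<DIM('a)} Basis"
    using ex_bij_betw_nat_finite[of "Basis :: 'a set"] by (auto simp: atLeast0LessThan)
  have "bij_betw idx_nat (UNIV :: 'a basis_idx set) {..<DIM('a)}"
    unfolding bij_betw_def using type_definition.Rep_range[OF type_definition_basis_idx]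
    by (auto simp: inj_def idx_nat_inject)
  then show ?thesis
    using bij_betw_trans[OF _ e] by blast
qed

definition basis_coords :: "('n::finite \<Rightarrow> 'a::euclidean_space) \<Rightarrow> 'a \<Rightarrow> real^'n"
  where "basis_coords E x = (\<chi> i. x \<bullet> E i)"

definition basis_comb :: "('n::finite \<Rightarrow> 'a::euclidean_space) \<Rightarrow> real^'n \<Rightarrow> 'a"
  where "basis_comb E v = (\<Sum>i\<in>UNIV. v $ i *\<^sub>R E i)"

lemma linear_basis_coords: "linear (basis_coords E)"
  by (rule linearI) (simp_all add: basis_coords_def vec_eq_iff inner_add_left)

lemma linear_basis_comb: "linear (basis_comb E)"
  by (rule linearI) (simp_all add: basis_comb_def scaleR_add_left sum.distrib scaleR_sum_right)

context
  fixes E :: "'n::finite \<Rightarrow> 'a::euclidean_space"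
  assumes E: "bij_betw E UNIV Basis"
begin

private lemma sum_reindex_Basis: "(\<Sum>i\<in>UNIV. h (E i)) = (\<Sum>b\<in>Basis. h b)"
  using sum.reindex_bij_betw[OF E, of h] .

private lemma inner_E: "E i \<bullet> E j = (if i = j then 1 else 0)"
proof -
  have "E i \<in> Basis" "E j \<in> Basis" "E i = E j \<longleftrightarrow> i = j"
    using E by (auto simp: bij_betw_def inj_def)
  then show ?thesis
    by (simp add: inner_Basis)
qed

lemma basis_comb_coords: "basis_comb E (basis_coords E x) = x"
  using sum_reindex_Basis[of "\<lambda>b. (x \<bullet> b) *\<^sub>R b"]
  by (simp add: basis_comb_def basis_coords_def euclidean_representation)

lemma basis_coords_comb: "basis_coords E (basis_comb E v) = v"
proof -
  have "(\<Sum>i\<in>UNIV. v $ i *\<^sub>R E i) \<bullet> E j = v $ j" for j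
    by (simp add: inner_sum_left inner_E if_distrib cong: if_cong)
  then show ?thesis
    by (simp add: basis_comb_def basis_coords_def vec_eq_iff)
qed

lemma inner_basis_coords: "basis_coords E x \<bullet> basis_coords E y = x \<bullet> y"
proof -
  have "basis_coords E x \<bullet> basis_coords E y = (\<Sum>b\<in>Basis. (x \<bullet> b) * (y \<bullet> b))"
    using sum_reindex_Basis[of "\<lambda>b. (x \<bullet> b) * (y \<bullet> b)"]
    by (simp add: basis_coords_def inner_vec_def)
  then show ?thesis
    by (simp add: euclidean_inner[symmetric])
qed

lemma inner_basis_comb: "basis_comb E v \<bullet> basis_comb E w = v \<bullet> w"
  by (metis inner_basis_coords basis_coords_comb)

lemma basis_coords_image_Basis: "basis_coords E ` Basis = Basis"
proof -
  have "basis_coords E (E i) = axis i 1" for i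
    by (simp add: basis_coords_def vec_eq_iff axis_def inner_E)
  then have "basis_coords E ` E ` UNIV = Basis"
    by (auto simp: image_image Basis_vec_def)
  then show ?thesis
    using E by (simp add: bij_betw_def)
qed

lemma lborel_distr_basis_coords: "distr lborel borel (basis_coords E) = lborel"
proof (rule lborel_distr_isometry_Basis[OF linear_basis_coords basis_coords_comb])
  show "bij_betw (basis_coords E) Basis Basis"
    unfolding bij_betw_def using basis_coords_image_Basis
    by (metis basis_comb_coords inj_on_inverseI)
qed (rule inner_basis_coords)

end

lemma lborel_distr_orthogonal_transformation:
  fixes f :: "'a::euclidean_space \<Rightarrow> 'a"
  assumes f: "orthogonal_transformation f"
  shows "distr lborel borel f = lborel"
proof -
  obtain E :: "'a basis_idx \<Rightarrow> 'a" where E: "bij_betw E UNIV Basis"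
    using ex_bij_basis_idx by blast
  define \<phi> where "\<phi> = basis_coords E"
  define \<psi> where "\<psi> = basis_comb E"
  define g where "g = \<phi> \<circ> f \<circ> \<psi>"
  have [measurable]: "\<psi> \<in> borel_measurable borel" "f \<in> borel_measurable borel"
    using f unfolding \<psi>_def
    by (auto intro: borel_measurable_linear linear_basis_comb orthogonal_transformation_linear)
  have lborel_\<psi>: "distr lborel borel \<psi> = lborel"
  proof -
    have [measurable]: "\<phi> \<in> borel_measurable borel"
      unfolding \<phi>_def by (intro borel_measurable_linear linear_basis_coords)
    have "distr lborel borel \<psi> = distr (distr lborel borel \<phi>) borel \<psi>"
      using lborel_distr_basis_coords[OF E] by (simp add: \<phi>_def)
    also have "\<dots> = distr lborel borel (\<psi> \<circ> \<phi>)"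
      by (simp add: distr_distr)
    also have "\<psi> \<circ> \<phi> = (\<lambda>x. x)"
      by (simp add: fun_eq_iff \<phi>_def \<psi>_def basis_comb_coords[OF E])
    finally show ?thesis
      by (simp add: distr_id2)
  qed
  have "orthogonal_transformation g"
    using f unfolding g_def \<phi>_def \<psi>_def orthogonal_transformation_def
    by (simp add: inner_basis_coords[OF E] inner_basis_comb[OF E] linear_basis_coords
        linear_basis_comb linear_compose)
  then have [measurable]: "g \<in> borel_measurable borel" and lborel_g: "distr lborel borel g = lborel"
    by (auto intro: borel_measurable_linear orthogonal_transformation_linear
        lborel_distr_orthogonal_transformation_vec)
  have "f \<circ> \<psi> = \<psi> \<circ> g"
    by (auto simp: g_def \<phi>_def \<psi>_def basis_comb_coords[OF E])
  have "distr lborel borel f = distr (distr lborel borel \<psi>) borel f"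
    by (simp add: lborel_\<psi>)
  also have "\<dots> = distr lborel borel (\<psi> \<circ> g)"
    by (simp add: distr_distr \<open>f \<circ> \<psi> = \<psi> \<circ> g\<close>)
  also have "\<dots> = distr (distr lborel borel g) borel \<psi>"
    by (simp add: distr_distr)
  finally show ?thesis
    by (simp add: lborel_g lborel_\<psi>)
qed

lemma sets_sphere_surface[simp, measurable_cong]:
  "sets (sphere_surface :: 'a::euclidean_space measure) = sets borel"
  by (simp add: sphere_surface_def)

lemma space_sphere_surface[simp]: "space (sphere_surface :: 'a::euclidean_space measure) = UNIV"
  by (simp add: sphere_surface_def)

lemma emeasure_sphere_surface:
  assumes "A \<in> sets borel"
  shows "emeasure (sphere_surface :: 'a::euclidean_space measure) A
    = real DIM('a) * emeasure lborel (sgn -` A \<inter> ball 0 1)"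
proof -
  have "sgn \<in> measurable (restrict_space lborel (ball (0::'a) 1)) borel"
    by (intro measurable_restrict_space1) simp
  then show ?thesis
    using assms
    by (simp add: sphere_surface_def emeasure_density_const emeasure_distr space_restrict_space
        emeasure_restrict_space)
qed

lemma sphere_surface_distr_orthogonal_transformation:
  fixes f :: "'a::euclidean_space \<Rightarrow> 'a"
  assumes f: "orthogonal_transformation f"
  shows "distr sphere_surface sphere_surface f = sphere_surface"
proof (rule measure_eqI)
  have lin: "linear f"
    using f by (rule orthogonal_transformation_linear)
  have [measurable]: "f \<in> borel_measurable borel"
    using lin by (rule borel_measurable_linear)
  have norm_f: "norm (f x) = norm x" for x
    using f by (rule orthogonal_transformation_norm)
  have sgn_f: "sgn (f x) = f (sgn x)" for x
    by (simp add: sgn_div_norm norm_f linear_scale[OF lin] divide_inverse)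
  fix A :: "'a set" assume "A \<in> sets (distr sphere_surface sphere_surface f)"
  then have [measurable]: "A \<in> sets borel" by simp
  have [measurable]: "sgn -` A \<inter> ball 0 1 \<in> sets borel"
    by (intro sets.Int measurable_sets_borel[OF borel_measurable_sgn]) auto
  have preimage: "sgn -` (f -` A) \<inter> ball 0 1 = f -` (sgn -` A \<inter> ball 0 1)"
    by (auto simp: sgn_f norm_f)
  have "emeasure (distr sphere_surface sphere_surface f) A = emeasure sphere_surface (f -` A)"
    by (simp add: emeasure_distr)
  also have "\<dots> = real DIM('a) * emeasure lborel (f -` (sgn -` A \<inter> ball 0 1))"
    using measurable_sets_borel[of f borel A] by (simp add: emeasure_sphere_surface preimage)
  also have "emeasure lborel (f -` (sgn -` A \<inter> ball 0 1))
      = emeasure (distr lborel borel f) (sgn -` A \<inter> ball 0 1)"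
    by (subst emeasure_distr) auto
  also have "real DIM('a) * \<dots> = emeasure sphere_surface A"
    by (simp add: lborel_distr_orthogonal_transformation[OF f] emeasure_sphere_surface)
  finally show "emeasure (distr sphere_surface sphere_surface f) A = emeasure sphere_surface A" .
qed simp

lemma distr_density_invariant:
  assumes [measurable]: "f \<in> measurable M M" "h \<in> borel_measurable M"
    and "distr M M f = M" and "\<And>x. x \<in> space M \<Longrightarrow> h (f x) = h x"
  shows "distr (density M h) M f = density M h"
proof -
  have "density M h = density (distr M M f) h"
    using assms(3) by simp
  also have "\<dots> = distr (density M (\<lambda>x. h (f x))) M f"
    by (rule density_distr) measurable
  also have "density M (\<lambda>x. h (f x)) = density M h"
    using assms(4) by (intro density_cong) auto
  finally show ?thesis ..
qed

lemma integral_id_orthogonal_invariant: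
  fixes N :: "'a::euclidean_space measure"
  assumes sets_N: "sets N = sets borel" and f: "orthogonal_transformation f"
    and invariant: "distr N N f = N"
  shows "f (integral\<^sup>L N (\<lambda>x. x)) = integral\<^sup>L N (\<lambda>x. x)"
proof -
  have "f \<in> measurable N N"
    using borel_measurable_linear[OF orthogonal_transformation_linear[OF f]]
    by (simp add: measurable_cong_sets[OF sets_N sets_N])
  then have "integral\<^sup>L N (\<lambda>x. x) = integral\<^sup>L N f"
    using integral_distr[of f N N "\<lambda>x. x"] invariant measurable_ident_sets[OF sets_N] by simp
  also have "\<dots> = f (integral\<^sup>L N (\<lambda>x. x))"
  proof (rule integral_bounded_linear')
    show "bounded_linear f" "bounded_linear (inv f)"
      using f orthogonal_transformation_inv[OF f]
      by (auto simp flip: linear_conv_bounded_linear intro: orthogonal_transformation_linear)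
    show "\<forall>x. inv f (f x) = x"
      using orthogonal_transformation_bij[OF f] by (simp add: bij_is_inj)
  qed
  finally show ?thesis ..
qed

text \<open>For \<open>w = 0\<close> the division by zero makes this the identity, so no lemma below needs
  \<open>w \<noteq> 0\<close>.\<close>

definition reflect_along :: "'a::real_inner \<Rightarrow> 'a \<Rightarrow> 'a" where
  "reflect_along w x = x - (2 * (w \<bullet> x) / (w \<bullet> w)) *\<^sub>R w"

lemma orthogonal_transformation_reflect_along:
  "orthogonal_transformation (reflect_along (w :: 'a::euclidean_space))"
  unfolding orthogonal_transformation_def
proof
  show "linear (reflect_along w)"
    by (rule linearI) (simp_all add: reflect_along_def inner_add_right algebra_simps add_divide_distrib)
  show "\<forall>x y. reflect_along w x \<bullet> reflect_along w y = x \<bullet> y"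
    by (simp add: reflect_along_def inner_diff_left inner_diff_right algebra_simps power2_eq_square)
      (simp add: field_simps inner_commute)
qed

lemma inner_reflect_along_orthogonal: "w \<bullet> v = 0 \<Longrightarrow> v \<bullet> reflect_along w x = v \<bullet> x"
  by (simp add: reflect_along_def inner_diff_right inner_commute)

lemma in_span_if_reflect_along_fixed:
  fixes v :: "'a::euclidean_space"
  assumes fixed: "\<And>w. (\<And>s. s \<in> S \<Longrightarrow> w \<bullet> s = 0) \<Longrightarrow> reflect_along w v = v"
  shows "v \<in> span S"
proof -
  obtain y z where y: "y \<in> span S" and z: "\<And>u. u \<in> span S \<Longrightarrow> orthogonal z u" and v: "v = y + z"
    using orthogonal_subspace_decomp_exists[of S v] by blast
  have "z \<bullet> v = z \<bullet> z"
    using z[OF y] by (simp add: v inner_add_right orthogonal_def)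
  moreover have "reflect_along z v = v"
    using z by (intro fixed) (simp add: orthogonal_def span_base)
  ultimately have "z = 0"
    by (cases "z = 0") (simp_all add: reflect_along_def)
  then show ?thesis
    using y v by simp
qed

lemma S1_distr_reflect_along:
  assumes "w \<bullet> \<mu>0 = 0" "w \<bullet> \<mu>1 = 0"
  shows "distr (S1 \<mu>0 \<mu>1 \<kappa>0 \<kappa>1) (S1 \<mu>0 \<mu>1 \<kappa>0 \<kappa>1) (reflect_along w) = S1 \<mu>0 \<mu>1 \<kappa>0 \<kappa>1"
proof -
  have [measurable]: "reflect_along w \<in> borel_measurable borel"
    by (intro borel_measurable_linear orthogonal_transformation_linear
        orthogonal_transformation_reflect_along)
  have "distr (S1 \<mu>0 \<mu>1 \<kappa>0 \<kappa>1) sphere_surface (reflect_along w) = S1 \<mu>0 \<mu>1 \<kappa>0 \<kappa>1"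
    unfolding S1_def
    by (rule distr_density_invariant)
      (simp_all add: S1_dens_def inner_reflect_along_orthogonal assms
        sphere_surface_distr_orthogonal_transformation orthogonal_transformation_reflect_along)
  then show ?thesis
    by (simp add: S1_def cong: distr_cong)
qed

theorem mainTheorem2:
  fixes M :: "'b measure" and X :: "'b \<Rightarrow> 'a::euclidean_space"
    and \<mu>0 \<mu>1 :: 'a and \<kappa>0 \<kappa>1 :: real
  assumes "DIM('a) \<ge> 3"
    and "norm \<mu>0 = 1" and "norm \<mu>1 = 1"
    and "\<mu>0 \<bullet> \<mu>1 \<in> {-1<..<1}"
    and "\<kappa>0 > 0" and "\<kappa>1 > 0"
    and "prob_space M"
    and "X \<in> borel_measurable M"
    and "distr M borel X = S1 \<mu>0 \<mu>1 \<kappa>0 \<kappa>1"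
  shows "\<exists>a b :: real. prob_space.expectation M X = a *\<^sub>R \<mu>0 + b *\<^sub>R \<mu>1"
proof -
  let ?N = "S1 \<mu>0 \<mu>1 \<kappa>0 \<kappa>1"
  have mean: "integral\<^sup>L M X = integral\<^sup>L ?N (\<lambda>x. x)"
    using assms(8) by (simp flip: assms(9) add: integral_distr)
  have "integral\<^sup>L ?N (\<lambda>x. x) \<in> span {\<mu>0, \<mu>1}"
  proof (rule in_span_if_reflect_along_fixed)
    fix w assume "\<And>s. s \<in> {\<mu>0, \<mu>1} \<Longrightarrow> w \<bullet> s = 0"
    then show "reflect_along w (integral\<^sup>L ?N (\<lambda>x. x)) = integral\<^sup>L ?N (\<lambda>x. x)"
      by (intro integral_id_orthogonal_invariant orthogonal_transformation_reflect_along
          S1_distr_reflect_along) (simp_all add: S1_def)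
  qed
  then obtain a b where "integral\<^sup>L ?N (\<lambda>x. x) - a *\<^sub>R \<mu>0 = b *\<^sub>R \<mu>1"
    by (auto simp: span_breakdown_eq span_singleton)
  then show ?thesis
    by (metis mean add.commute diff_eq_eq)
qed

end
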